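(* There exists a non-empty open set $\mathcal{U}_1\subset(0,\infty)^5$ of parameter values $(A,r,\beta_0,a,\mu)$ such that, for every parameter value in $\mathcal{U}_1$, the system $$\dot S = S(A-S)-\beta_0 IS,\qquad \dot I=\beta_0 IS-\mu I-\frac{rI}{a+I}$$ satisfies $\mathcal{R}_0=\dfrac{\beta_0A}{\mu+\frac{r}{a}}<1$ and its flow has exactly two endemic equilibria, one of which is a sink and the other a saddle.
   Context: The system is an autonomous planar ODE in the variables $S$ (susceptible) and $I$ (infectious), considered on the closed quadrant $S,I\ge 0$, with positive parameters $A,r,\beta_0,a,\mu$; here $\mu$ denotes the total death rate of infectious individuals (natural death rate plus disease-induced death rate). The quantity $\mathcal{R}_0=\beta_0A/(\mu+r/a)$ is called the basic reproduction number. An endemic equilibrium is an equilibrium (zero of the vector field) with $I\neq 0$; the equilibria with $I=0$, namely $(0,0)$ and $(A,0)$, are the disease-free equilibria. A sink is an equilibrium whose Jacobian eigenvalues all have negative real part; a saddle is an equilibrium whose Jacobian has two real eigenvalues of opposite signs. *)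

theory Defs
  imports "HOL-Analysis.Analysis"
begin

type_synonym params = "real \<times> real \<times> real \<times> real \<times> real"
  (* (A, r, beta0, a, mu) *)

definition fS :: "params \<Rightarrow> real \<Rightarrow> real \<Rightarrow> real" where
  "fS p S I = (case p of (A, r, b0, a, mu) \<Rightarrow> S * (A - S) - b0 * I * S)"

definition fI :: "params \<Rightarrow> real \<Rightarrow> real \<Rightarrow> real" where
  "fI p S I = (case p of (A, r, b0, a, mu) \<Rightarrow> b0 * I * S - mu * I - r * I / (a + I))"

definition R0 :: "params \<Rightarrow> real" where
  "R0 p = (case p of (A, r, b0, a, mu) \<Rightarrow> b0 * A / (mu + r / a))"

definition is_equilibrium :: "params \<Rightarrow> real \<times> real \<Rightarrow> bool" where
  "is_equilibrium p e = (fS p (fst e) (snd e) = 0 \<and> fI p (fst e) (snd e) = 0)"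

definition endemic_equilibria :: "params \<Rightarrow> (real \<times> real) set" where
  "endemic_equilibria p = {e. fst e \<ge> 0 \<and> snd e \<ge> 0 \<and> snd e \<noteq> 0 \<and> is_equilibrium p e}"

definition jac :: "params \<Rightarrow> real \<times> real \<Rightarrow> real \<times> real \<times> real \<times> real" where
  "jac p e = (case e of (S, I) \<Rightarrow>
     (deriv (\<lambda>x. fS p x I) S, deriv (\<lambda>y. fS p S y) I,
      deriv (\<lambda>x. fI p x I) S, deriv (\<lambda>y. fI p S y) I))"

definition jac_eigenvalue :: "params \<Rightarrow> real \<times> real \<Rightarrow> complex \<Rightarrow> bool" where
  "jac_eigenvalue p e z = (case jac p e of (j11, j12, j21, j22) \<Rightarrow>
     (of_real j11 - z) * (of_real j22 - z) - of_real j12 * of_real j21 = 0)"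

definition is_sink :: "params \<Rightarrow> real \<times> real \<Rightarrow> bool" where
  "is_sink p e = (is_equilibrium p e \<and> (\<forall>z. jac_eigenvalue p e z \<longrightarrow> Re z < 0))"

definition is_saddle :: "params \<Rightarrow> real \<times> real \<Rightarrow> bool" where
  "is_saddle p e = (is_equilibrium p e \<and>
     (\<exists>l1 l2 :: real. l1 < 0 \<and> 0 < l2 \<and> jac_eigenvalue p e (of_real l1) \<and> jac_eigenvalue p e (of_real l2)))"

end

theory Submission
  imports Defs "HOL-Library.Quadratic_Discriminant"
begin

text \<open>At an endemic equilibrium S = A - b0 I, and substituting this into the I-equation leaves
a quadratic q(I) = 0 whose constant term is positive exactly when R0 < 1. If moreover its linear
coefficient is negative and its discriminant positive, q has two positive roots I_lo < I_hi, so
there are exactly two endemic equilibria. The Jacobian determinant at an endemic equilibrium is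
S I q'(I) / (a + I): negative at I_lo, which is therefore a saddle, and positive at I_hi, which is
a sink as soon as the trace there is negative as well. All these conditions are strict
inequalities between functions continuous on the positive orthant, so they cut out an open set,
and they hold at (A, r, b0, a, mu) = (5, 6, 1, 1, 1).\<close>

lemma char_poly_root_Re_neg:
  fixes j11 j12 j21 j22 :: real and z :: complex
  assumes root: "(of_real j11 - z) * (of_real j22 - z) - of_real j12 * of_real j21 = 0"
    and trace: "j11 + j22 < 0" and det: "0 < j11 * j22 - j12 * j21"
  shows "Re z < 0"
proof -
  obtain x y where z: "z = Complex x y" by (cases z)
  from root have re: "x^2 - (j11 + j22) * x + (j11 * j22 - j12 * j21) = y^2"
    and im: "y * (2 * x - (j11 + j22)) = 0"
    unfolding z complex_eq_iff by (simp_all add: algebra_simps power2_eq_square)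
  show ?thesis
  proof (cases "y = 0")
    case True
    have "0 < x^2 - (j11 + j22) * x + (j11 * j22 - j12 * j21)" if "0 \<le> x"
    proof -
      have "0 \<le> x^2 + (- (j11 + j22)) * x"
        using that trace by (intro add_nonneg_nonneg mult_nonneg_nonneg) auto
      with det show ?thesis by linarith
    qed
    with re True z show ?thesis by force
  next
    case False
    with im have "2 * x = j11 + j22" by simp
    with trace z show ?thesis by simp
  qed
qed

lemma char_poly_roots_opposite_sign:
  fixes j11 j12 j21 j22 :: real
  assumes det: "j11 * j22 - j12 * j21 < 0"
  obtains l1 l2 where "l1 < 0" "0 < l2"
    "(j11 - l1) * (j22 - l1) - j12 * j21 = 0" "(j11 - l2) * (j22 - l2) - j12 * j21 = 0"
proof -
  define t where "t = j11 + j22"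
  define w where "w = sqrt (discrim 1 (- t) (j11 * j22 - j12 * j21))"
  have char_poly: "(j11 - l) * (j22 - l) - j12 * j21 = 1 * l^2 + (- t) * l + (j11 * j22 - j12 * j21)"
    for l unfolding t_def by (simp add: algebra_simps power2_eq_square)
  have disc: "t^2 < discrim 1 (- t) (j11 * j22 - j12 * j21)"
    using det by (simp add: discrim_def)
  then have "\<bar>t\<bar> < w"
    unfolding w_def by (simp add: real_less_rsqrt)
  have nonneg: "0 \<le> discrim 1 (- t) (j11 * j22 - j12 * j21)"
    using disc zero_le_power2[of t] by (meson less_imp_le order_trans)
  have "(j11 - l) * (j22 - l) - j12 * j21 = 0" if "l = (t - w) / 2 \<or> l = (t + w) / 2" for l
    unfolding char_poly
    using discriminant_nonneg[where a = 1 and b = "- t" and c = "j11 * j22 - j12 * j21" and x = l]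
      nonneg that
    by (auto simp: w_def)
  with \<open>\<bar>t\<bar> < w\<close> show thesis
    by (intro that[of "(t - w) / 2" "(t + w) / 2"]) auto
qed

lemma jac_eigenvalue_of_real_iff:
  "jac_eigenvalue p e (of_real l) \<longleftrightarrow>
     (case jac p e of (j11, j12, j21, j22) \<Rightarrow> (j11 - l) * (j22 - l) - j12 * j21 = 0)"
  unfolding jac_eigenvalue_def by (simp split: prod.split flip: of_real_diff of_real_mult)

lemma jac_explicit:
  assumes "a + I \<noteq> 0"
  shows "jac (A, r, b0, a, mu) (S, I) =
    (A - 2 * S - b0 * I, - (b0 * S), b0 * I, b0 * S - mu - r * a / (a + I)^2)"
proof -
  have "((\<lambda>x. x * (A - x) - b0 * I * x) has_real_derivative A - 2 * S - b0 * I) (at S)"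
    "((\<lambda>y. S * (A - S) - b0 * y * S) has_real_derivative - (b0 * S)) (at I)"
    "((\<lambda>x. b0 * I * x - mu * I - r * I / (a + I)) has_real_derivative b0 * I) (at S)"
    by (auto intro!: derivative_eq_intros simp: algebra_simps)
  moreover have "((\<lambda>y. b0 * y * S - mu * y - r * y / (a + y))
      has_real_derivative b0 * S - mu - r * a / (a + I)^2) (at I)"
    using assms by (auto intro!: derivative_eq_intros simp: field_simps power2_eq_square)
  ultimately show ?thesis
    unfolding jac_def fS_def fI_def by (simp add: DERIV_imp_deriv)
qed

text \<open>Coefficients of the quadratic r - (b0 (A - b0 I) - mu) (a + I) in I, the numerator of the
I-equation at S = A - b0 I; its positive roots are the I-coordinates of the endemic equilibria.\<close>

definition quad_a :: "params \<Rightarrow> real" where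
  "quad_a p = (case p of (A, r, b0, a, mu) \<Rightarrow> b0^2)"

definition quad_b :: "params \<Rightarrow> real" where
  "quad_b p = (case p of (A, r, b0, a, mu) \<Rightarrow> a * b0^2 + mu - b0 * A)"

definition quad_c :: "params \<Rightarrow> real" where
  "quad_c p = (case p of (A, r, b0, a, mu) \<Rightarrow> r - a * (b0 * A - mu))"

definition endemic_I_lo :: "params \<Rightarrow> real" where
  "endemic_I_lo p = (- quad_b p - sqrt (discrim (quad_a p) (quad_b p) (quad_c p))) / (2 * quad_a p)"

definition endemic_I_hi :: "params \<Rightarrow> real" where
  "endemic_I_hi p = (- quad_b p + sqrt (discrim (quad_a p) (quad_b p) (quad_c p))) / (2 * quad_a p)"

text \<open>The trace of the Jacobian at the endemic equilibrium with I-coordinate I,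
multiplied by (a + I)^2 (cf. \<open>jac_at_endemic\<close>).\<close>

definition endemic_trace_num :: "params \<Rightarrow> real \<Rightarrow> real" where
  "endemic_trace_num p I = (case p of (A, r, b0, a, mu) \<Rightarrow> r * I - (A - b0 * I) * (a + I)^2)"

definition positive_params :: "params set" where
  "positive_params = {0<..} \<times> {0<..} \<times> {0<..} \<times> {0<..} \<times> {0<..}"

definition sink_saddle_region :: "params set" where
  "sink_saddle_region = {p \<in> positive_params. 0 < quad_c p \<and> quad_b p < 0 \<and>
     0 < discrim (quad_a p) (quad_b p) (quad_c p) \<and> endemic_trace_num p (endemic_I_hi p) < 0}"

lemma quad_poly_eq:
  "quad_a (A, r, b0, a, mu) * I^2 + quad_b (A, r, b0, a, mu) * I + quad_c (A, r, b0, a, mu) =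
     r - (b0 * (A - b0 * I) - mu) * (a + I)"
  by (simp add: quad_a_def quad_b_def quad_c_def algebra_simps power2_eq_square)

lemma R0_less_one_iff:
  assumes "0 < r" "0 < a" "0 < mu"
  shows "R0 (A, r, b0, a, mu) < 1 \<longleftrightarrow> 0 < quad_c (A, r, b0, a, mu)"
proof -
  have "0 < mu + r / a" using assms by (simp add: add_pos_pos)
  then have "R0 (A, r, b0, a, mu) < 1 \<longleftrightarrow> a * (b0 * A) < a * (mu + r / a)"
    using assms by (simp add: R0_def divide_less_eq)
  also have "\<dots> \<longleftrightarrow> 0 < quad_c (A, r, b0, a, mu)"
    using assms by (simp add: quad_c_def algebra_simps)
  finally show ?thesis .
qed

lemma quadratic_two_positive_roots:
  fixes qa qb qc :: real
  assumes "0 < qa" "qb < 0" "0 < qc" "0 < discrim qa qb qc"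
  defines "x_lo \<equiv> (- qb - sqrt (discrim qa qb qc)) / (2 * qa)"
    and "x_hi \<equiv> (- qb + sqrt (discrim qa qb qc)) / (2 * qa)"
  shows "qa * x^2 + qb * x + qc = 0 \<longleftrightarrow> x = x_lo \<or> x = x_hi"
    and "0 < x_lo" and "x_lo < x_hi" and "2 * qa * x_lo + qb < 0" and "0 < 2 * qa * x_hi + qb"
proof -
  show "qa * x^2 + qb * x + qc = 0 \<longleftrightarrow> x = x_lo \<or> x = x_hi"
    using discriminant_nonneg[where a = qa and b = qb and c = qc and x = x] assms
    unfolding x_lo_def x_hi_def by auto
  have "discrim qa qb qc < qb^2"
    using assms by (simp add: discrim_def)
  then have "sqrt (discrim qa qb qc) < - qb"
    using real_sqrt_less_mono assms by fastforce
  then show "0 < x_lo"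
    using assms by (simp add: x_lo_def)
  show "x_lo < x_hi" "2 * qa * x_lo + qb < 0" "0 < 2 * qa * x_hi + qb"
    using assms by (simp_all add: x_lo_def x_hi_def divide_strict_right_mono)
qed

lemma S_pos_on_I_nullcline:
  fixes r b0 a mu I S :: real
  assumes "0 < r" "0 < b0" "0 < a" "0 < mu" "0 < I" and "b0 * S - mu = r / (a + I)"
  shows "0 < S"
proof -
  have "0 < a + I"
    using \<open>0 < a\<close> \<open>0 < I\<close> by simp
  with assms have "0 < mu + r / (a + I)"
    by (simp add: add_pos_pos)
  with assms have "0 < b0 * S" by linarith
  with assms show ?thesis by (simp add: zero_less_mult_iff)
qed

lemma endemic_equilibrium_iff:
  assumes "0 < r" "0 < b0" "0 < a" "0 < mu"
  shows "(S, I) \<in> endemic_equilibria (A, r, b0, a, mu) \<longleftrightarrow>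
    0 < I \<and> S = A - b0 * I \<and> b0 * S - mu = r / (a + I)"
proof (cases "0 < I")
  case I: True
  have fI: "fI (A, r, b0, a, mu) S I = I * (b0 * S - mu - r / (a + I))"
    by (simp add: fI_def algebra_simps)
  have fS: "fS (A, r, b0, a, mu) S I = S * (A - b0 * I - S)"
    by (simp add: fS_def algebra_simps)
  have "0 < S" if "b0 * S - mu = r / (a + I)"
    using S_pos_on_I_nullcline[OF assms I that] .
  then show ?thesis
    using I unfolding endemic_equilibria_def is_equilibrium_def by (auto simp: fI fS)
qed (auto simp: endemic_equilibria_def)

lemma endemic_equilibrium_S_pos:
  assumes "0 < r" "0 < b0" "0 < a" "0 < mu" and "(S, I) \<in> endemic_equilibria (A, r, b0, a, mu)"
  shows "0 < S"
proof -
  have "0 < I" "b0 * S - mu = r / (a + I)"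
    using endemic_equilibrium_iff[OF assms(1-4)] assms(5) by auto
  then show ?thesis
    by (rule S_pos_on_I_nullcline[OF assms(1-4)])
qed

lemma jac_at_endemic:
  assumes "0 < r" "0 < b0" "0 < a" "0 < mu" and "(S, I) \<in> endemic_equilibria (A, r, b0, a, mu)"
  shows "jac (A, r, b0, a, mu) (S, I) = (- S, - (b0 * S), b0 * I, r * I / (a + I)^2)"
proof -
  have I: "0 < I" and S: "S = A - b0 * I" and eq: "b0 * S - mu = r / (a + I)"
    using endemic_equilibrium_iff[OF assms(1-4)] assms(5) by auto
  have aI: "a + I \<noteq> 0"
    using \<open>0 < a\<close> I by simp
  have "b0 * S - mu - r * a / (a + I)^2 = r / (a + I) - r * a / (a + I)^2"
    by (simp add: eq)
  also have "\<dots> = r * I / (a + I)^2"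
    using aI by (simp add: divide_simps) (simp add: algebra_simps power2_eq_square)
  finally have "b0 * S - mu - r * a / (a + I)^2 = r * I / (a + I)^2" .
  then show ?thesis
    using \<open>0 < a\<close> I S by (simp add: jac_explicit)
qed

text \<open>The factor 2 quad_a I + quad_b is the derivative q'(I) of the quadratic.\<close>

lemma det_jac_at_endemic:
  assumes "0 < r" "0 < b0" "0 < a" "0 < mu" and "(S, I) \<in> endemic_equilibria (A, r, b0, a, mu)"
  shows "(- S) * (r * I / (a + I)^2) - (- (b0 * S)) * (b0 * I) =
    S * I * (2 * quad_a (A, r, b0, a, mu) * I + quad_b (A, r, b0, a, mu)) / (a + I)"
proof -
  have I: "0 < I" and S: "S = A - b0 * I" and eq: "b0 * S - mu = r / (a + I)"
    using endemic_equilibrium_iff[OF assms(1-4)] assms(5) by auto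
  have aI: "a + I \<noteq> 0"
    using \<open>0 < a\<close> I by simp
  have "(- S) * (r * I / (a + I)^2) - (- (b0 * S)) * (b0 * I) =
      (- S) * ((b0 * S - mu) * I / (a + I)) + b0^2 * S * I"
    using aI by (simp add: eq power2_eq_square)
  also have "\<dots> = S * I * (b0^2 * (a + I) - (b0 * S - mu)) / (a + I)"
    using aI by (simp add: field_simps power2_eq_square)
  also have "b0^2 * (a + I) - (b0 * S - mu) =
      2 * quad_a (A, r, b0, a, mu) * I + quad_b (A, r, b0, a, mu)"
    by (simp add: S quad_a_def quad_b_def algebra_simps power2_eq_square)
  finally show ?thesis .
qed

lemma endemic_is_saddle:
  assumes "0 < r" "0 < b0" "0 < a" "0 < mu"
    and endemic: "(S, I) \<in> endemic_equilibria (A, r, b0, a, mu)"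
    and "2 * quad_a (A, r, b0, a, mu) * I + quad_b (A, r, b0, a, mu) < 0"
  shows "is_saddle (A, r, b0, a, mu) (S, I)"
proof -
  have "0 < S"
    using endemic_equilibrium_S_pos[OF assms(1-5)] .
  have "0 < I"
    using endemic_equilibrium_iff[OF assms(1-4)] endemic by auto
  have "(- S) * (r * I / (a + I)^2) - (- (b0 * S)) * (b0 * I) < 0"
    unfolding det_jac_at_endemic[OF assms(1-5)]
    using \<open>0 < S\<close> \<open>0 < I\<close> \<open>0 < a\<close> assms(6) by (intro divide_neg_pos mult_pos_neg) auto
  then obtain l1 l2 where "l1 < 0" "0 < l2"
    "(- S - l1) * (r * I / (a + I)^2 - l1) - (- (b0 * S)) * (b0 * I) = 0"
    "(- S - l2) * (r * I / (a + I)^2 - l2) - (- (b0 * S)) * (b0 * I) = 0"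
    by (rule char_poly_roots_opposite_sign)
  moreover have "is_equilibrium (A, r, b0, a, mu) (S, I)"
    using endemic by (simp add: endemic_equilibria_def)
  ultimately show ?thesis
    unfolding is_saddle_def jac_eigenvalue_of_real_iff jac_at_endemic[OF assms(1-5)] prod.case
    by blast
qed

lemma endemic_is_sink:
  assumes "0 < r" "0 < b0" "0 < a" "0 < mu"
    and endemic: "(S, I) \<in> endemic_equilibria (A, r, b0, a, mu)"
    and "0 < 2 * quad_a (A, r, b0, a, mu) * I + quad_b (A, r, b0, a, mu)"
    and trace: "endemic_trace_num (A, r, b0, a, mu) I < 0"
  shows "is_sink (A, r, b0, a, mu) (S, I)"
proof -
  have S: "0 < S" "S = A - b0 * I" and "0 < I"
    using endemic_equilibrium_S_pos[OF assms(1-5)] endemic_equilibrium_iff[OF assms(1-4)] endemic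
    by auto
  have det: "0 < (- S) * (r * I / (a + I)^2) - (- (b0 * S)) * (b0 * I)"
    unfolding det_jac_at_endemic[OF assms(1-5)]
    using S \<open>0 < I\<close> \<open>0 < a\<close> assms(6) by (intro divide_pos_pos mult_pos_pos) auto
  have "r * I < S * (a + I)^2"
    using trace S by (simp add: endemic_trace_num_def)
  then have tr: "- S + r * I / (a + I)^2 < 0"
    using \<open>0 < a\<close> \<open>0 < I\<close> by (simp add: divide_less_eq)
  have "Re z < 0" if "jac_eigenvalue (A, r, b0, a, mu) (S, I) z" for z
    using that unfolding jac_eigenvalue_def jac_at_endemic[OF assms(1-5)] prod.case
    by (rule char_poly_root_Re_neg[OF _ tr det])
  moreover have "is_equilibrium (A, r, b0, a, mu) (S, I)"
    using endemic by (simp add: endemic_equilibria_def)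
  ultimately show ?thesis
    unfolding is_sink_def by blast
qed

lemma sink_saddle_region_dynamics:
  assumes "p \<in> sink_saddle_region"
  shows "R0 p < 1 \<and>
    (\<exists>e1 e2. e1 \<noteq> e2 \<and> endemic_equilibria p = {e1, e2} \<and> is_sink p e1 \<and> is_saddle p e2)"
proof -
  obtain A r b0 a mu where p: "p = (A, r, b0, a, mu)"
    by (cases p) auto
  from assms have pos: "0 < r" "0 < b0" "0 < a" "0 < mu"
    and qb: "quad_b p < 0" and qc: "0 < quad_c p"
    and disc: "0 < discrim (quad_a p) (quad_b p) (quad_c p)"
    and trace: "endemic_trace_num p (endemic_I_hi p) < 0"
    by (auto simp: sink_saddle_region_def positive_params_def p)
  have qa: "0 < quad_a p"
    using pos by (simp add: p quad_a_def)
  note roots = quadratic_two_positive_roots[OF qa qb qc disc,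
      folded endemic_I_lo_def endemic_I_hi_def]
  have endemic_iff: "(S, I) \<in> endemic_equilibria p \<longleftrightarrow>
      S = A - b0 * I \<and> (I = endemic_I_lo p \<or> I = endemic_I_hi p)" for S I
  proof -
    have "b0 * (A - b0 * I) - mu = r / (a + I) \<longleftrightarrow>
        quad_a p * I^2 + quad_b p * I + quad_c p = 0" if "0 < I"
      using pos that unfolding p quad_poly_eq by (auto simp: eq_divide_eq)
    then have "(S, I) \<in> endemic_equilibria p \<longleftrightarrow>
        0 < I \<and> S = A - b0 * I \<and> quad_a p * I^2 + quad_b p * I + quad_c p = 0"
      using endemic_equilibrium_iff[OF pos] unfolding p by auto
    then show ?thesis
      using roots by auto
  qed
  have "is_sink p (A - b0 * endemic_I_hi p, endemic_I_hi p)"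
    using endemic_is_sink[OF pos] endemic_iff roots(5) trace unfolding p by auto
  moreover have "is_saddle p (A - b0 * endemic_I_lo p, endemic_I_lo p)"
    using endemic_is_saddle[OF pos] endemic_iff roots(4) unfolding p by auto
  moreover have "endemic_equilibria p =
      {(A - b0 * endemic_I_hi p, endemic_I_hi p), (A - b0 * endemic_I_lo p, endemic_I_lo p)}"
    using endemic_iff by auto
  moreover have "R0 p < 1"
    using R0_less_one_iff pos qc unfolding p by auto
  ultimately show ?thesis
    using roots(3) by (intro conjI exI) auto
qed

lemma open_sink_saddle_region: "open sink_saddle_region"
proof -
  let ?disc = "\<lambda>p. discrim (quad_a p) (quad_b p) (quad_c p)"
  let ?trace = "\<lambda>p. endemic_trace_num p (endemic_I_hi p)"
  have cont: "continuous_on positive_params quad_b" "continuous_on positive_params quad_c"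
    "continuous_on positive_params ?disc" "continuous_on positive_params ?trace"
    unfolding endemic_trace_num_def endemic_I_hi_def quad_a_def quad_b_def quad_c_def
      discrim_def case_prod_unfold
    by (intro continuous_intros; auto simp: positive_params_def)+
  have open_positive: "open positive_params"
    unfolding positive_params_def by (intro open_Times open_greaterThan)
  have region_eq: "sink_saddle_region =
      (positive_params \<inter> quad_c -` {0<..}) \<inter> (positive_params \<inter> quad_b -` {..<0}) \<inter>
      (positive_params \<inter> ?disc -` {0<..}) \<inter> (positive_params \<inter> ?trace -` {..<0})"
    unfolding sink_saddle_region_def by auto
  show ?thesis
    unfolding region_eq
    by (intro open_Int continuous_open_preimage cont open_positive open_lessThan open_greaterThan)
qed

lemma sink_saddle_region_example: "(5, 6, 1, 1, 1) \<in> sink_saddle_region"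
proof -
  have disc: "discrim (quad_a (5, 6, 1, 1, 1)) (quad_b (5, 6, 1, 1, 1)) (quad_c (5, 6, 1, 1, 1)) = 1"
    by (simp add: discrim_def quad_a_def quad_b_def quad_c_def)
  then have "endemic_I_hi (5, 6, 1, 1, 1) = 2"
    by (simp add: endemic_I_hi_def quad_a_def quad_b_def)
  with disc show ?thesis
    by (simp add: sink_saddle_region_def positive_params_def quad_b_def quad_c_def
        endemic_trace_num_def)
qed

theorem theoremA:
  shows "\<exists>U :: params set. open U \<and> U \<noteq> {} \<and>
    U \<subseteq> {(A, r, b0, a, mu). A > 0 \<and> r > 0 \<and> b0 > 0 \<and> a > 0 \<and> mu > 0} \<and>
    (\<forall>p\<in>U. R0 p < 1 \<and>
       (\<exists>e1 e2. e1 \<noteq> e2 \<and> endemic_equilibria p = {e1, e2} \<and>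
                is_sink p e1 \<and> is_saddle p e2))"
proof (intro exI[of _ sink_saddle_region] conjI ballI)
  show "open sink_saddle_region"
    by (rule open_sink_saddle_region)
  show "sink_saddle_region \<noteq> {}"
    using sink_saddle_region_example by blast
  show "sink_saddle_region \<subseteq> {(A, r, b0, a, mu). A > 0 \<and> r > 0 \<and> b0 > 0 \<and> a > 0 \<and> mu > 0}"
    by (auto simp: sink_saddle_region_def positive_params_def)
qed (use sink_saddle_region_dynamics in blast)+

end
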